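(* Let $R \in \mathcal{R}$, $t \in R$ and $t \triangleright^* t'$. Then $t' \in R$.
   Context: With disjoint sets of $\lambda$-variables $x,y,\dots$ and $\mu$-variables $a,b,\dots$, terms and $\mathcal{E}$-terms are $\mathcal{T} ::= x \mid \lambda x.\mathcal{T} \mid (\mathcal{T}\;\mathcal{E}) \mid \langle \mathcal{T},\mathcal{T}\rangle \mid \omega_1\mathcal{T} \mid \omega_2\mathcal{T} \mid \mu a.\mathcal{T} \mid (a\;\mathcal{T})$, $\mathcal{E} ::= \mathcal{T} \mid \pi_1 \mid \pi_2 \mid [x.\mathcal{T}, y.\mathcal{T}]$ (up to renaming of bound variables). The one-step reduction $\triangleright$ is the closure under all constructors of: $(\lambda x.u\;v)\triangleright u[x:=v]$; $(\langle t_1,t_2\rangle\;\pi_i)\triangleright t_i$; $(\omega_i t\;[x_1.u_1,x_2.u_2])\triangleright u_i[x_i:=t]$; $((t\;[x_1.u_1,x_2.u_2])\;\varepsilon)\triangleright(t\;[x_1.(u_1\;\varepsilon),x_2.(u_2\;\varepsilon)])$; $(\mu a.t\;\varepsilon)\triangleright\mu a.t[a:=^*\varepsilon]$, where $t[a:=^*\varepsilon]$ replaces inductively each subterm $(a\;v)$ by $(a\;(v\;\varepsilon))$; $\triangleright^*$ is its reflexive-transitive closure. $\mathcal{N}$ is the set of strongly normalizable terms. For sets $K,L$ of terms: $K\to L=\{t\in\mathcal{T} : (t\;u)\in L \text{ for all } u\in K\}$; $K\wedge L=\{t : (t\;\pi_1)\in K, (t\;\pi_2)\in L\}$; $K\vee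 L=\{t :$ for all $\lambda$-variables $x,y$ and all $u,v\in\mathcal{N}$, if $u[x:=r]\in\mathcal{N}$ and $v[y:=s]\in\mathcal{N}$ for all $r\in K,s\in L$, then $(t\;[x.u,y.v])\in\mathcal{N}\}$. The set $\mathcal{R}$ of reducibility candidates is the smallest set of sets of terms containing $\mathcal{N}$ and closed under $\to,\wedge,\vee$. *)

theory Defs
  imports Main
begin

text \<open>Bound variables are represented by de Bruijn indices, with two separate
  index spaces: one for lambda-variables (bound by Lam and by the two
  branches of a Case) and one for mu-variables (bound by Mu).
  Var i is a lambda-variable, MApp a t is (a t) for a mu-variable a.\<close>

datatype trm =
    Var nat
  | Lam trm
  | App trm elim
  | Pair trm trm
  | Inj1 trm
  | Inj2 trm
  | Mu trm
  | MApp nat trm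
and elim =
    ETm trm
  | Proj1
  | Proj2
  | Case trm trm

primrec liftL :: "nat \<Rightarrow> trm \<Rightarrow> trm" and liftLE :: "nat \<Rightarrow> elim \<Rightarrow> elim" where
  "liftL k (Var i) = (if i < k then Var i else Var (Suc i))"
| "liftL k (Lam t) = Lam (liftL (Suc k) t)"
| "liftL k (App t e) = App (liftL k t) (liftLE k e)"
| "liftL k (Pair t1 t2) = Pair (liftL k t1) (liftL k t2)"
| "liftL k (Inj1 t) = Inj1 (liftL k t)"
| "liftL k (Inj2 t) = Inj2 (liftL k t)"
| "liftL k (Mu t) = Mu (liftL k t)"
| "liftL k (MApp a t) = MApp a (liftL k t)"
| "liftLE k (ETm t) = ETm (liftL k t)"
| "liftLE k Proj1 = Proj1"
| "liftLE k Proj2 = Proj2"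
| "liftLE k (Case u v) = Case (liftL (Suc k) u) (liftL (Suc k) v)"

primrec liftM :: "nat \<Rightarrow> trm \<Rightarrow> trm" and liftME :: "nat \<Rightarrow> elim \<Rightarrow> elim" where
  "liftM k (Var i) = Var i"
| "liftM k (Lam t) = Lam (liftM k t)"
| "liftM k (App t e) = App (liftM k t) (liftME k e)"
| "liftM k (Pair t1 t2) = Pair (liftM k t1) (liftM k t2)"
| "liftM k (Inj1 t) = Inj1 (liftM k t)"
| "liftM k (Inj2 t) = Inj2 (liftM k t)"
| "liftM k (Mu t) = Mu (liftM (Suc k) t)"
| "liftM k (MApp a t) = MApp (if a < k then a else Suc a) (liftM k t)"
| "liftME k (ETm t) = ETm (liftM k t)"
| "liftME k Proj1 = Proj1"
| "liftME k Proj2 = Proj2"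
| "liftME k (Case u v) = Case (liftM k u) (liftM k v)"

text \<open>Capture-avoiding substitution t[x:=s] of the lambda-index k by s
  (indices above k are decremented, as the binder of k disappears).\<close>
primrec substL :: "trm \<Rightarrow> nat \<Rightarrow> trm \<Rightarrow> trm" and substLE :: "elim \<Rightarrow> nat \<Rightarrow> trm \<Rightarrow> elim" where
  "substL (Var i) k s = (if i < k then Var i else if i = k then s else Var (i - 1))"
| "substL (Lam t) k s = Lam (substL t (Suc k) (liftL 0 s))"
| "substL (App t e) k s = App (substL t k s) (substLE e k s)"
| "substL (Pair t1 t2) k s = Pair (substL t1 k s) (substL t2 k s)"
| "substL (Inj1 t) k s = Inj1 (substL t k s)"
| "substL (Inj2 t) k s = Inj2 (substL t k s)"
| "substL (Mu t) k s = Mu (substL t k (liftM 0 s))"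
| "substL (MApp a t) k s = MApp a (substL t k s)"
| "substLE (ETm t) k s = ETm (substL t k s)"
| "substLE Proj1 k s = Proj1"
| "substLE Proj2 k s = Proj2"
| "substLE (Case u v) k s = Case (substL u (Suc k) (liftL 0 s)) (substL v (Suc k) (liftL 0 s))"

text \<open>Structural substitution t[a:=* e]: every subterm (a v) becomes (a (v e)),
  where a is the mu-index k.\<close>
primrec mstr :: "trm \<Rightarrow> nat \<Rightarrow> elim \<Rightarrow> trm" and mstrE :: "elim \<Rightarrow> nat \<Rightarrow> elim \<Rightarrow> elim" where
  "mstr (Var i) k e = Var i"
| "mstr (Lam t) k e = Lam (mstr t k (liftLE 0 e))"
| "mstr (App t e') k e = App (mstr t k e) (mstrE e' k e)"
| "mstr (Pair t1 t2) k e = Pair (mstr t1 k e) (mstr t2 k e)"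
| "mstr (Inj1 t) k e = Inj1 (mstr t k e)"
| "mstr (Inj2 t) k e = Inj2 (mstr t k e)"
| "mstr (Mu t) k e = Mu (mstr t (Suc k) (liftME 0 e))"
| "mstr (MApp a t) k e =
     (if a = k then MApp a (App (mstr t k e) e) else MApp a (mstr t k e))"
| "mstrE (ETm t) k e = ETm (mstr t k e)"
| "mstrE Proj1 k e = Proj1"
| "mstrE Proj2 k e = Proj2"
| "mstrE (Case u v) k e = Case (mstr u k (liftLE 0 e)) (mstr v k (liftLE 0 e))"

inductive step :: "trm \<Rightarrow> trm \<Rightarrow> bool" and stepE :: "elim \<Rightarrow> elim \<Rightarrow> bool" where
  beta: "step (App (Lam u) (ETm v)) (substL u 0 v)"
| proj1: "step (App (Pair t1 t2) Proj1) t1"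
| proj2: "step (App (Pair t1 t2) Proj2) t2"
| case1: "step (App (Inj1 t) (Case u1 u2)) (substL u1 0 t)"
| case2: "step (App (Inj2 t) (Case u1 u2)) (substL u2 0 t)"
| comm: "step (App (App t (Case u1 u2)) e)
              (App t (Case (App u1 (liftLE 0 e)) (App u2 (liftLE 0 e))))"
| mu: "step (App (Mu t) e) (Mu (mstr t 0 (liftME 0 e)))"
| c_Lam: "step t t' \<Longrightarrow> step (Lam t) (Lam t')"
| c_App1: "step t t' \<Longrightarrow> step (App t e) (App t' e)"
| c_App2: "stepE e e' \<Longrightarrow> step (App t e) (App t e')"
| c_Pair1: "step t t' \<Longrightarrow> step (Pair t s) (Pair t' s)"
| c_Pair2: "step s s' \<Longrightarrow> step (Pair t s) (Pair t s')"
| c_Inj1: "step t t' \<Longrightarrow> step (Inj1 t) (Inj1 t')"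
| c_Inj2: "step t t' \<Longrightarrow> step (Inj2 t) (Inj2 t')"
| c_Mu: "step t t' \<Longrightarrow> step (Mu t) (Mu t')"
| c_MApp: "step t t' \<Longrightarrow> step (MApp a t) (MApp a t')"
| c_ETm: "step t t' \<Longrightarrow> stepE (ETm t) (ETm t')"
| c_Case1: "step u u' \<Longrightarrow> stepE (Case u v) (Case u' v)"
| c_Case2: "step v v' \<Longrightarrow> stepE (Case u v) (Case u v')"

abbreviation steps :: "trm \<Rightarrow> trm \<Rightarrow> bool" where
  "steps \<equiv> step\<^sup>*\<^sup>*"

definition SN :: "trm set" where
  "SN = {t. \<not> (\<exists>f. f 0 = t \<and> (\<forall>i. step (f i) (f (Suc i))))}"

definition arrow :: "trm set \<Rightarrow> trm set \<Rightarrow> trm set" where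
  "arrow K L = {t. \<forall>u\<in>K. App t (ETm u) \<in> L}"

definition conj :: "trm set \<Rightarrow> trm set \<Rightarrow> trm set" where
  "conj K L = {t. App t Proj1 \<in> K \<and> App t Proj2 \<in> L}"

text \<open>In de Bruijn form the bound variable x of [x.u, y.v] is index 0 of u,
  and u[x:=r] is substL u 0 r.\<close>
definition disj :: "trm set \<Rightarrow> trm set \<Rightarrow> trm set" where
  "disj K L = {t. \<forall>u v. u \<in> SN \<longrightarrow> v \<in> SN \<longrightarrow>
       (\<forall>r\<in>K. substL u 0 r \<in> SN) \<longrightarrow> (\<forall>s\<in>L. substL v 0 s \<in> SN) \<longrightarrow>
       App t (Case u v) \<in> SN}"

inductive_set RC :: "trm set set" where
  RC_SN: "SN \<in> RC"
| RC_arrow: "K \<in> RC \<Longrightarrow> L \<in> RC \<Longrightarrow> arrow K L \<in> RC"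
| RC_conj: "K \<in> RC \<Longrightarrow> L \<in> RC \<Longrightarrow> conj K L \<in> RC"
| RC_disj: "K \<in> RC \<Longrightarrow> L \<in> RC \<Longrightarrow> disj K L \<in> RC"

end

theory Submission
  imports Defs
begin

(* Every candidate is closed under one-step reduction: for SN because an infinite
  reduction from t' extends to one from t; the candidates built by arrow, conj and disj are
  defined by membership of terms App t e, and App t e reduces to App t' e. *)

definition step_closed :: "trm set \<Rightarrow> bool" where
  "step_closed R \<longleftrightarrow> (\<forall>t t'. t \<in> R \<longrightarrow> step t t' \<longrightarrow> t' \<in> R)"

lemma step_closedD: "step_closed R \<Longrightarrow> t \<in> R \<Longrightarrow> step t t' \<Longrightarrow> t' \<in> R"
  by (auto simp: step_closed_def)

lemma step_closed_SN: "step_closed SN"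
proof (unfold step_closed_def, intro allI impI)
  fix t t'
  assume "t \<in> SN" and "step t t'"
  show "t' \<in> SN"
  proof (rule ccontr)
    assume "t' \<notin> SN"
    then obtain f where f: "f 0 = t'" "\<forall>i. step (f i) (f (Suc i))"
      by (auto simp: SN_def)
    define g where "g i = (case i of 0 \<Rightarrow> t | Suc j \<Rightarrow> f j)" for i
    have "g 0 = t \<and> (\<forall>i. step (g i) (g (Suc i)))"
      using f \<open>step t t'\<close> by (auto simp: g_def split: nat.splits)
    with \<open>t \<in> SN\<close> show False
      by (auto simp: SN_def)
  qed
qed

lemma step_closed_arrow: "step_closed L \<Longrightarrow> step_closed (arrow K L)"
  by (auto simp: step_closed_def arrow_def intro: c_App1)

lemma step_closed_conj: "step_closed K \<Longrightarrow> step_closed L \<Longrightarrow> step_closed (conj K L)"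
  unfolding step_closed_def conj_def by (blast intro: c_App1)

lemma step_closed_disj: "step_closed (disj K L)"
  using step_closed_SN by (auto simp: step_closed_def disj_def intro: c_App1)

lemma step_closed_RC: "R \<in> RC \<Longrightarrow> step_closed R"
  by (induction R rule: RC.induct)
    (auto intro: step_closed_SN step_closed_arrow step_closed_conj step_closed_disj)

lemma step_closed_steps:
  assumes "step_closed R" and "t \<in> R" and "steps t t'"
  shows "t' \<in> R"
  using assms(3,2) by (induction rule: rtranclp_induct) (auto intro: step_closedD[OF assms(1)])

theorem lemma8:
  assumes "R \<in> RC" and "t \<in> R" and "steps t t'"
  shows "t' \<in> R"
  using step_closed_steps[OF step_closed_RC[OF assms(1)] assms(2,3)] .

end
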